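(* Let $n\ge 1$ be an integer and let $\mathbb{Z}_5^n$ denote the elementary abelian $5$-group of rank $n$. Suppose that $A\subseteq\mathbb{Z}_5^n$ is sum-free. If $|A|>\frac32\cdot5^{n-1}$, then there are a proper subgroup $H<\mathbb{Z}_5^n$ and an element $e\notin H$ such that $A\subseteq(e+H)\cup(-e+H)$.
   Context: A subset $S$ of an abelian group is sum-free if there are no $x,y,z\in S$ (not necessarily distinct) with $x+y=z$; equivalently $S\cap 2S=\emptyset$, where $2S=\{s_1+s_2: s_1,s_2\in S\}$. *)

theory Defs
  imports "HOL-Analysis.Finite_Cartesian_Product" "HOL-Library.Numeral_Type"
begin

(* Z_5^n is modelled as the type  5 ^ 'n  (vectors over Z/5Z indexed by a finite type 'n,
   with n = CARD('n) >= 1). *)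

definition sum_free :: "'a::ab_group_add set \<Rightarrow> bool" where
  "sum_free S \<longleftrightarrow> (\<forall>x\<in>S. \<forall>y\<in>S. \<forall>z\<in>S. x + y \<noteq> z)"

definition add_subgroup :: "'a::ab_group_add set \<Rightarrow> bool" where
  "add_subgroup H \<longleftrightarrow> 0 \<in> H \<and> (\<forall>x\<in>H. \<forall>y\<in>H. x + y \<in> H) \<and> (\<forall>x\<in>H. - x \<in> H)"

end

theory Submission
  imports Defs
begin

text \<open>
  For a functional \<open>u\<close> on \<open>\<int>\<^sub>5\<^sup>n\<close> the profile \<open>a\<^sub>u(j)\<close> counts the \<open>x \<in> A\<close> with
  \<open>u \<cdot> x = j\<close>; let \<open>N = 5\<^sup>n\<^sup>-\<^sup>1\<close> and \<open>E = profile_energy N\<close>. Counting the pairs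
  \<open>(u, (x, y, z))\<close> with \<open>u \<cdot> (x + y - z) = 0\<close> shows that for sum-free \<open>A\<close> the energies
  \<open>E(a\<^sub>u)\<close>, \<open>u \<noteq> 0\<close>, add up to \<open>-(12/175) |A| (2|A| - 3N) (7|A| + 15N)\<close>, which is negative
  when \<open>|A| > 3N/2\<close>; so \<open>E(a\<^sub>u) < 0\<close> for some \<open>u \<noteq> 0\<close>. Sum-freeness also gives
  \<open>a\<^sub>u(i) + a\<^sub>u(i + j) \<le> N\<close> whenever \<open>a\<^sub>u(j) > 0\<close>. Unless \<open>A\<close> lies in the two cosets
  \<open>u \<cdot> x = \<plusminus>c\<close> (\<open>c = 1\<close> or \<open>2\<close>), this yields \<open>a\<^sub>u(1) + a\<^sub>u(4) \<le> N\<close> and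
  \<open>a\<^sub>u(2) + a\<^sub>u(3) \<le> N\<close>, and under these constraints and \<open>\<Sum>\<^sub>j a\<^sub>u(j) > 3N/2\<close> the energy is
  nonnegative: its Fourier expansion on \<open>\<int>\<^sub>5\<close> is a sum of nonnegative terms, the last one
  by an explicit polynomial certificate.
\<close>


section \<open>Arithmetic in \<open>\<int>\<^sub>5\<close> and the dot product\<close>

lemma UNIV_5: "(UNIV :: 5 set) = {0, 1, 2, 3, 4}"
proof -
  have "x \<in> {0, 1, 2, 3, 4}" for x :: 5
  proof (cases x)
    case (of_int z)
    then have "z \<in> {0, 1, 2, 3, 4}" by auto
    then show ?thesis using of_int by auto
  qed
  then show ?thesis by auto
qed

lemma mod_5_numerals: "(5::5) = 0" "(6::5) = 1" "(7::5) = 2" "(8::5) = 3"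
  by simp_all

lemma nonzero_5_inverse: "d \<noteq> 0 \<Longrightarrow> d * d ^ 3 = (1::5)"
  using UNIV_5 by (auto simp: numeral_eq_Suc)

lemma mem_multiples_nonzero_5:
  fixes c x :: 5
  assumes "c \<noteq> 0"
  shows "x \<in> {0, c, 2 * c, 3 * c, 4 * c}"
proof -
  have "x = (c ^ 3 * x) * c"
    using nonzero_5_inverse[OF assms] by (metis mult.commute mult.left_commute mult_1_right)
  moreover have "c ^ 3 * x \<in> {0, 1, 2, 3, 4}" by (simp flip: UNIV_5)
  ultimately show ?thesis by auto
qed

definition dotp :: "'a::comm_ring_1 ^ 'n \<Rightarrow> 'a ^ 'n \<Rightarrow> 'a" where
  "dotp u v = (\<Sum>i\<in>UNIV. u $ i * v $ i)"

lemma dotp_zero_left [simp]: "dotp 0 v = 0"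
  by (simp add: dotp_def)

lemma dotp_zero_right [simp]: "dotp u 0 = 0"
  by (simp add: dotp_def)

lemma dotp_add_right: "dotp u (v + w) = dotp u v + dotp u w"
  by (simp add: dotp_def distrib_left sum.distrib)

lemma dotp_diff_right: "dotp u (v - w) = dotp u v - dotp u w"
  by (simp add: dotp_def right_diff_distrib sum_subtractf)

lemma dotp_uminus_right: "dotp u (- v) = - dotp u v"
  by (simp add: dotp_def sum_negf)

lemma dotp_commute: "dotp u v = dotp v u"
  by (simp add: dotp_def mult.commute)

lemma dotp_axis_right: "dotp u (axis k t) = u $ k * t"
proof -
  have "(\<Sum>i\<in>UNIV. u $ i * axis k t $ i) = (\<Sum>i\<in>UNIV. if i = k then u $ k * t else 0)"
    by (rule sum.cong) (auto simp: axis_def)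
  then show ?thesis by (simp add: dotp_def)
qed

lemma card_dotp_level:
  fixes u :: "'a::{finite, comm_ring_1} ^ 'n"
  assumes unit: "u $ k * d = 1"
  shows "card {v. dotp u v = j} = CARD('a) ^ (CARD('n) - 1)"
proof -
  define L where "L j = {v. dotp u v = j}" for j
  have shift: "dotp u (v + axis k (j * d)) = dotp u v + j" for v j
    using mult.left_commute[of "u $ k" j d] by (simp add: dotp_add_right dotp_axis_right unit)
  have levels_eq: "card (L j) = card (L 0)" for j
  proof -
    have "L j = (\<lambda>v. v + axis k (j * d)) ` L 0"
    proof (intro equalityI subsetI)
      fix v assume "v \<in> L j"
      then have "v - axis k (j * d) \<in> L 0" and "v = (v - axis k (j * d)) + axis k (j * d)"
        using shift[of "v - axis k (j * d)" j] by (auto simp: L_def)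
      then show "v \<in> (\<lambda>v. v + axis k (j * d)) ` L 0" by blast
    qed (auto simp: L_def shift)
    then show ?thesis by (simp add: card_image)
  qed
  have "CARD('a) * card (L 0) = (\<Sum>j\<in>UNIV. card (L j))"
    by (subst sum.cong[OF refl levels_eq]) simp_all
  also have "\<dots> = CARD('a ^ 'n)"
    using sum.group[of "UNIV :: ('a ^ 'n) set" UNIV "dotp u" "\<lambda>_. 1 :: nat"] by (simp add: L_def)
  also have "\<dots> = CARD('a) * CARD('a) ^ (CARD('n) - 1)"
    by (simp flip: power_Suc)
  finally show ?thesis using levels_eq[of j] by (simp add: L_def)
qed

lemma nonzero_vec_5_unit_coordinate:
  fixes u :: "5 ^ 'n"
  assumes "u \<noteq> 0"
  obtains k d where "u $ k * d = 1"
proof -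
  obtain k where "u $ k \<noteq> 0" using assms by (auto simp: vec_eq_iff)
  then show ?thesis using nonzero_5_inverse that by blast
qed

lemma card_dotp_level_5:
  fixes u :: "5 ^ 'n"
  assumes "u \<noteq> 0"
  shows "card {v. dotp u v = j} = 5 ^ (CARD('n) - 1)"
proof -
  obtain k d where "u $ k * d = 1" using nonzero_vec_5_unit_coordinate[OF assms] .
  from card_dotp_level[OF this] show ?thesis by simp
qed

lemma card_orthogonal_5:
  fixes w :: "5 ^ 'n"
  shows "real (card {u. dotp u w = 0}) = (if w = 0 then 5 else 1) * 5 ^ (CARD('n) - 1)"
proof (cases "w = 0")
  case True
  have "(5::nat) ^ CARD('n) = 5 * 5 ^ (CARD('n) - 1)" by (simp flip: power_Suc)
  then show ?thesis using True by simp
next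
  case False
  then show ?thesis using card_dotp_level_5[of w 0] by (simp add: dotp_commute)
qed

lemma dotp_eq_solvable_5:
  fixes u :: "5 ^ 'n"
  assumes "u \<noteq> 0"
  obtains e where "dotp u e = c"
proof -
  obtain k d where "u $ k * d = 1" using nonzero_vec_5_unit_coordinate[OF assms] .
  then have "dotp u (axis k (d * c)) = c" by (simp add: dotp_axis_right flip: mult.assoc)
  then show ?thesis using that by blast
qed

lemma two_cosets_cover:
  fixes u w :: "'a::comm_ring_1 ^ 'n"
  assumes "dotp u w = c" and "c \<noteq> 0" and "\<forall>x\<in>A. dotp u x = c \<or> dotp u x = - c"
  shows "\<exists>H e. add_subgroup H \<and> H \<noteq> UNIV \<and> e \<notin> H \<and>
           A \<subseteq> (\<lambda>h. e + h) ` H \<union> (\<lambda>h. - e + h) ` H"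
proof -
  define H where "H = {v. dotp u v = 0}"
  have "add_subgroup H"
    by (simp add: H_def add_subgroup_def dotp_add_right dotp_uminus_right)
  moreover have "w \<notin> H" using assms by (simp add: H_def)
  moreover from this have "H \<noteq> UNIV" by blast
  moreover have "A \<subseteq> (\<lambda>h. w + h) ` H \<union> (\<lambda>h. - w + h) ` H"
  proof
    fix x assume "x \<in> A"
    then consider "x - w \<in> H" | "x + w \<in> H"
      using assms by (auto simp: H_def dotp_add_right dotp_diff_right)
    then show "x \<in> (\<lambda>h. w + h) ` H \<union> (\<lambda>h. - w + h) ` H"
    proof cases
      case 1
      then show ?thesis by (intro UnI1 image_eqI[of x _ "x - w"]) auto
    next
      case 2
      then show ?thesis by (intro UnI2 image_eqI[of x _ "x + w"]) auto
    qed
  qed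
  ultimately show ?thesis by (intro exI[of _ H] exI[of _ w]) simp
qed

section \<open>Profiles of a set along a linear functional\<close>

definition profile :: "('a::comm_ring_1 ^ 'n) set \<Rightarrow> 'a ^ 'n \<Rightarrow> 'a \<Rightarrow> real" where
  "profile A u j = real (card {x \<in> A. dotp u x = j})"

lemma profile_nonneg: "0 \<le> profile A u j"
  by (simp add: profile_def)

lemma profile_eq_0_iff:
  fixes A :: "('a::{finite, comm_ring_1} ^ 'n) set"
  shows "profile A u j = 0 \<longleftrightarrow> (\<forall>x\<in>A. dotp u x \<noteq> j)"
  by (auto simp: profile_def)

lemma profile_as_sum:
  fixes A :: "('a::{finite, comm_ring_1} ^ 'n) set"
  shows "profile A u j = (\<Sum>x\<in>A. of_bool (dotp u x = j))"
  by (simp add: profile_def Int_def)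

lemma sum_profile:
  fixes A :: "('a::{finite, comm_ring_1} ^ 'n) set"
  shows "(\<Sum>j\<in>UNIV. profile A u j * g j) = (\<Sum>x\<in>A. g (dotp u x))"
proof -
  have "(\<Sum>x\<in>A. g (dotp u x)) = (\<Sum>j\<in>UNIV. \<Sum>x | x \<in> A \<and> dotp u x = j. g (dotp u x))"
    using sum.group[of A UNIV "dotp u" "\<lambda>x. g (dotp u x)"] by simp
  also have "\<dots> = (\<Sum>j\<in>UNIV. profile A u j * g j)"
    by (simp add: profile_def)
  finally show ?thesis ..
qed

lemma sum_profile_eq_card:
  fixes A :: "('a::{finite, comm_ring_1} ^ 'n) set"
  shows "(\<Sum>j\<in>UNIV. profile A u j) = real (card A)"
  using sum_profile[of A u "\<lambda>_. 1"] by simp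

lemma sum_profile_at:
  fixes A :: "(5 ^ 'n) set"
  shows "(\<Sum>u\<in>UNIV. profile A u (dotp u w))
           = (real (card A) + (if w \<in> A then 4 else 0)) * 5 ^ (CARD('n) - 1)"
proof -
  have "profile A u (dotp u w) = (\<Sum>z\<in>A. of_bool (dotp u (w - z) = 0))" for u
    unfolding profile_as_sum by (intro sum.cong refl) (auto simp: dotp_diff_right)
  then have "(\<Sum>u\<in>UNIV. profile A u (dotp u w))
      = (\<Sum>z\<in>A. \<Sum>u\<in>UNIV. of_bool (dotp u (w - z) = 0))"
    by (simp only: sum.swap[of _ UNIV])
  also have "\<dots> = (\<Sum>z\<in>A. (1 + (if w = z then 4 else 0)) * 5 ^ (CARD('n) - 1))"
    by (intro sum.cong refl) (simp add: card_orthogonal_5)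
  also have "\<dots> = (real (card A) + (if w \<in> A then 4 else 0)) * 5 ^ (CARD('n) - 1)"
    by (simp add: sum.distrib flip: sum_distrib_right)
  finally show ?thesis .
qed

lemma sum_free_profile_bound:
  fixes A :: "(5 ^ 'n) set"
  assumes "sum_free A" and "u \<noteq> 0" and "0 < profile A u j"
  shows "profile A u i + profile A u (i + j) \<le> 5 ^ (CARD('n) - 1)"
proof -
  have "{x \<in> A. dotp u x = j} \<noteq> {}"
    using assms(3) by (auto simp: profile_def card_gt_0_iff)
  then obtain b where "b \<in> A" "dotp u b = j" by blast
  define S1 where "S1 = (\<lambda>x. x + b) ` {x \<in> A. dotp u x = i}"
  define S2 where "S2 = {x \<in> A. dotp u x = i + j}"
  have "card S1 = card {x \<in> A. dotp u x = i}"
    unfolding S1_def by (rule card_image) (auto simp: inj_on_def)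
  moreover have "S1 \<inter> S2 = {}"
    using assms(1) \<open>b \<in> A\<close> by (auto simp: S1_def S2_def sum_free_def)
  moreover have "S1 \<union> S2 \<subseteq> {v. dotp u v = i + j}"
    using \<open>dotp u b = j\<close> by (auto simp: S1_def S2_def dotp_add_right)
  then have "card (S1 \<union> S2) \<le> 5 ^ (CARD('n) - 1)"
    using card_mono[of "{v. dotp u v = i + j}"] card_dotp_level_5[OF assms(2)] by fastforce
  ultimately have "card {x \<in> A. dotp u x = i} + card S2 \<le> 5 ^ (CARD('n) - 1)"
    by (simp add: card_Un_disjoint)
  then show ?thesis unfolding profile_def S2_def by (simp flip: of_nat_add)
qed

lemma profile_constraints:
  fixes a :: "5 \<Rightarrow> real"
  assumes nonneg: "\<And>j. 0 \<le> a j"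
    and bound: "\<And>i j. 0 < a j \<Longrightarrow> a i + a (i + j) \<le> N"
    and "a 0 \<noteq> 0 \<or> a 2 \<noteq> 0 \<or> a 3 \<noteq> 0" and "a 0 \<noteq> 0 \<or> a 1 \<noteq> 0 \<or> a 4 \<noteq> 0"
  shows "a 1 + a 4 \<le> N \<and> a 2 + a 3 \<le> N"
proof
  have bound': "a i + a (i + j) \<le> N" if "a j \<noteq> 0" for i j
    using bound nonneg[of j] that by force
  show "a 1 + a 4 \<le> N"
    using \<open>a 0 \<noteq> 0 \<or> a 2 \<noteq> 0 \<or> a 3 \<noteq> 0\<close>
      bound'[where j = 0 and i = 1] bound'[where j = 0 and i = 4] bound'[where j = 2 and i = 4]
      bound'[where j = 3 and i = 1]
    by (elim disjE) (simp_all add: mod_5_numerals)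
  show "a 2 + a 3 \<le> N"
    using \<open>a 0 \<noteq> 0 \<or> a 1 \<noteq> 0 \<or> a 4 \<noteq> 0\<close>
      bound'[where j = 0 and i = 2] bound'[where j = 0 and i = 3] bound'[where j = 1 and i = 2]
      bound'[where j = 4 and i = 3]
    by (elim disjE) (simp_all add: mod_5_numerals)
qed

lemma two_cosets_of_vanishing_profile:
  fixes A :: "(5 ^ 'n) set"
  assumes "u \<noteq> 0" and "c \<noteq> 0"
    and "profile A u 0 = 0" and "profile A u (2 * c) = 0" and "profile A u (3 * c) = 0"
  shows "\<exists>H e. add_subgroup H \<and> H \<noteq> UNIV \<and> e \<notin> H \<and>
           A \<subseteq> (\<lambda>h. e + h) ` H \<union> (\<lambda>h. - e + h) ` H"
proof -
  obtain e where "dotp u e = c" using dotp_eq_solvable_5[OF assms(1)] .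
  moreover have "\<forall>x\<in>A. dotp u x = c \<or> dotp u x = - c"
  proof
    fix x assume "x \<in> A"
    then have "dotp u x \<notin> {0, 2 * c, 3 * c}"
      using assms(3-5) by (auto simp: profile_eq_0_iff)
    moreover have "4 * c = - c"
      by (simp add: eq_neg_iff_add_eq_0 mod_5_numerals)
    ultimately show "dotp u x = c \<or> dotp u x = - c"
      using mem_multiples_nonzero_5[OF assms(2), of "dotp u x"] by auto
  qed
  ultimately show ?thesis by (rule two_cosets_cover[OF _ assms(2)])
qed

section \<open>The profile energy\<close>

definition profile_energy :: "real \<Rightarrow> (5 \<Rightarrow> real) \<Rightarrow> real" where
  "profile_energy N a =
     (\<Sum>i\<in>UNIV. \<Sum>j\<in>UNIV. a i * a j * a (i + j)) - (\<Sum>j\<in>UNIV. a j) ^ 3 / 5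
     + (\<Sum>j\<in>UNIV. a j) / 5 * ((\<Sum>j\<in>UNIV. a j * a (j + j)) - (\<Sum>j\<in>UNIV. a j) ^ 2 / 5)
     + 27/35 * N * ((\<Sum>j\<in>UNIV. a j * a j) - (\<Sum>j\<in>UNIV. a j) ^ 2 / 5)"

lemma profile_energy_of_profile:
  fixes A :: "(5 ^ 'n) set"
  defines "m \<equiv> real (card A)"
  shows "profile_energy N (profile A u) =
     (\<Sum>x\<in>A. \<Sum>y\<in>A. profile A u (dotp u (x + y))) - m ^ 3 / 5
     + m / 5 * ((\<Sum>x\<in>A. profile A u (dotp u (x + x))) - m ^ 2 / 5)
     + 27/35 * N * ((\<Sum>x\<in>A. profile A u (dotp u x)) - m ^ 2 / 5)"
proof -
  let ?p = "profile A u"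
  have "(\<Sum>i\<in>UNIV. \<Sum>j\<in>UNIV. ?p i * ?p j * ?p (i + j))
      = (\<Sum>i\<in>UNIV. ?p i * (\<Sum>j\<in>UNIV. ?p j * ?p (i + j)))"
    by (simp add: sum_distrib_left mult.assoc)
  also have "\<dots> = (\<Sum>i\<in>UNIV. ?p i * (\<Sum>y\<in>A. ?p (i + dotp u y)))"
    by (simp only: sum_profile)
  also have "\<dots> = (\<Sum>x\<in>A. \<Sum>y\<in>A. ?p (dotp u (x + y)))"
    by (simp only: sum_profile dotp_add_right)
  moreover have "(\<Sum>j\<in>UNIV. ?p j * ?p (j + j)) = (\<Sum>x\<in>A. ?p (dotp u (x + x)))"
    by (simp only: sum_profile dotp_add_right)
  moreover have "(\<Sum>j\<in>UNIV. ?p j * ?p j) = (\<Sum>x\<in>A. ?p (dotp u x))"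
    by (rule sum_profile)
  ultimately show ?thesis
    by (simp only: profile_energy_def sum_profile_eq_card m_def)
qed

lemma profile_energy_at_zero:
  fixes A :: "(5 ^ 'n) set"
  defines "m \<equiv> real (card A)"
  shows "profile_energy N (profile A 0) = 24/25 * m ^ 3 + 108/175 * N * m ^ 2"
proof -
  have "profile A 0 0 = m" by (simp add: profile_def m_def)
  then show ?thesis
    by (simp add: profile_energy_of_profile m_def power2_eq_square power3_eq_cube)
qed

lemma sum_profile_energy:
  fixes A :: "(5 ^ 'n) set"
  assumes "sum_free A"
  defines "N \<equiv> (5::real) ^ (CARD('n) - 1)" and "m \<equiv> real (card A)"
  shows "(\<Sum>u\<in>UNIV. profile_energy N (profile A u)) = 108/35 * m * N ^ 2"
proof -
  define T B P where "T u = (\<Sum>x\<in>A. \<Sum>y\<in>A. profile A u (dotp u (x + y)))"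
    and "B u = (\<Sum>x\<in>A. profile A u (dotp u (x + x)))"
    and "P u = (\<Sum>x\<in>A. profile A u (dotp u x))" for u
  have notin: "x + y \<notin> A" if "x \<in> A" "y \<in> A" for x y
    using assms(1) that by (auto simp: sum_free_def)
  have "sum T UNIV = (\<Sum>x\<in>A. \<Sum>y\<in>A. \<Sum>u\<in>UNIV. profile A u (dotp u (x + y)))"
    unfolding T_def by (subst sum.swap) (simp add: sum.swap[of _ UNIV])
  then have sum_T: "sum T UNIV = m ^ 3 * N"
    by (simp add: sum_profile_at notin N_def m_def power3_eq_cube cong: sum.cong)
  have "sum B UNIV = (\<Sum>x\<in>A. m * N)"
    unfolding B_def
  proof (subst sum.swap, intro sum.cong refl)
    fix x assume "x \<in> A"
    then show "(\<Sum>u\<in>UNIV. profile A u (dotp u (x + x))) = m * N"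
      using notin[of x x] by (simp add: sum_profile_at N_def m_def)
  qed
  then have sum_B: "sum B UNIV = m ^ 2 * N"
    by (simp add: m_def power2_eq_square)
  have "sum P UNIV = (\<Sum>x\<in>A. (m + 4) * N)"
    unfolding P_def by (subst sum.swap, intro sum.cong refl) (simp add: sum_profile_at N_def m_def)
  then have sum_P: "sum P UNIV = (m + 4) * m * N"
    by (simp add: m_def)
  have card: "(5::real) ^ CARD('n) = 5 * N"
    by (simp add: N_def flip: power_Suc)
  have "(\<Sum>u\<in>UNIV. profile_energy N (profile A u))
      = (\<Sum>u\<in>UNIV. T u - m ^ 3 / 5 + m / 5 * (B u - m ^ 2 / 5) + 27/35 * N * (P u - m ^ 2 / 5))"
    unfolding T_def B_def P_def m_def by (simp only: profile_energy_of_profile)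
  also have "\<dots> = sum T UNIV - 5 * N * (m ^ 3 / 5) + m / 5 * (sum B UNIV - 5 * N * (m ^ 2 / 5))
      + 27/35 * N * (sum P UNIV - 5 * N * (m ^ 2 / 5))"
    by (simp add: sum.distrib sum_subtractf card flip: sum_distrib_left sum_divide_distrib)
  also have "\<dots> = 108/35 * m * N ^ 2"
    by (simp add: sum_T sum_B sum_P algebra_simps power2_eq_square power3_eq_cube)
  finally show ?thesis .
qed

lemma sum_profile_energy_nonzero_neg:
  fixes A :: "(5 ^ 'n) set"
  assumes "sum_free A"
  defines "N \<equiv> (5::real) ^ (CARD('n) - 1)" and "m \<equiv> real (card A)"
  assumes "3 * N < 2 * m"
  shows "(\<Sum>u\<in>UNIV - {0}. profile_energy N (profile A u)) < 0"
proof -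
  have "(\<Sum>u\<in>UNIV - {0}. profile_energy N (profile A u))
      = (\<Sum>u\<in>UNIV. profile_energy N (profile A u)) - profile_energy N (profile A 0)"
    by (simp add: sum_diff1)
  also have "\<dots> = - 12/175 * m * ((2 * m - 3 * N) * (7 * m + 15 * N))"
    unfolding sum_profile_energy[OF assms(1)] profile_energy_at_zero N_def m_def
    by (simp add: algebra_simps power2_eq_square power3_eq_cube)
  also have "\<dots> < 0"
  proof -
    have "0 < N" by (simp add: N_def)
    with assms(4) have "0 < m * ((2 * m - 3 * N) * (7 * m + 15 * N))"
      by (intro mult_pos_pos) auto
    then show ?thesis by simp
  qed
  finally show ?thesis .
qed

section \<open>Nonnegativity of the profile energy\<close>

lemma extremal_form_nonneg:
  fixes c t :: real
  assumes "0 \<le> c" "3/2 \<le> c + t" "t \<le> 2" "7/5*c - 19/40*t + 27/70 \<le> 0"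
  shows "0 \<le> (2*c - t/2)^2 * (3/5*c - t/40 + 27/70) + 5/4*(2 - t)^2 * (7/5*c - 19/40*t + 27/70)"
proof -
  \<comment> \<open>A Positivstellensatz certificate in the slacks of the hypotheses.\<close>
  define F1 F2 F3 F4 where "F1 = c" and "F2 = c + t - 3/2" and "F3 = 2 - t"
    and "F4 = 19/40*t - 7/5*c - 27/70"
  have "0 \<le> F1" "0 \<le> F2" "0 \<le> F3" "0 \<le> F4"
    using assms by (simp_all add: F1_def F2_def F3_def F4_def)
  then have "0 \<le> (392000/5545233) * (F4 * F4 * F4) + (179375/193877776) * (F3 * F3 * F3 * F3)
      + (220199/424682) * (F1 * F3 * F3) + (98352810541/1203639032925) * (F2 * F2 * F3)
      + (204326/7675605) * (F2 * F2) + (450016/545281245) * (F2 * F2 * F3 * F4)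
      + (3101449429339/3370189292190) * (F2 * F3 * F4) + (3150112/8179218675) * (F2 * F2 * F2 * F3)
      + (45920/327168747) * (F3 * F4 * F4 * F4) + (3916915904/2292645777) * (F3 * F4 * F4)
      + (4023877/10745847) * (F2 * F4) + (41552/219539) * (F1 * F1 * F3)
      + (359605180/271716417) * (F2 * F4 * F4) + (64288/109056249) * (F2 * F3 * F4 * F4)"
    by (intro add_nonneg_nonneg mult_nonneg_nonneg; simp)
  also have "\<dots> = (2*c - t/2)^2 * (3/5*c - t/40 + 27/70) + 5/4*(2 - t)^2 * (7/5*c - 19/40*t + 27/70)"
    unfolding F1_def F2_def F3_def F4_def by (simp add: field_simps power2_eq_square)
  finally show ?thesis .
qed

lemma real_part_form_nonneg:
  fixes c u v :: real
  assumes "0 \<le> c" "0 \<le> u" "u \<le> 1" "0 \<le> v" "v \<le> 1" "3/2 < c + u + v"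
  shows "0 \<le> (2*c - (u+v)/2)^2 * (3/5*c - (u+v)/40 + 27/70)
              + 5/4*(u - v)^2 * (7/5*c - 19/40*(u+v) + 27/70)"
proof (cases "0 \<le> 7/5*c - 19/40*(u+v) + 27/70")
  case True
  have "0 \<le> 3/5*c - (u+v)/40 + 27/70" using assms by argo
  then have "0 \<le> (2*c - (u+v)/2)^2 * (3/5*c - (u+v)/40 + 27/70)" by simp
  moreover have "0 \<le> 5/4*(u - v)^2 * (7/5*c - 19/40*(u+v) + 27/70)" using True by simp
  ultimately show ?thesis by linarith
next
  case False
  have "(2 - (u+v))^2 - (u - v)^2 = 4*((1-u)*(1-v))"
    by (simp add: power2_eq_square algebra_simps)
  moreover have "0 \<le> (1-u)*(1-v)" using assms by simp
  ultimately have "(u - v)^2 \<le> (2 - (u+v))^2" by linarith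
  then have "5/4*(2 - (u+v))^2 * (7/5*c - 19/40*(u+v) + 27/70)
      \<le> 5/4*(u - v)^2 * (7/5*c - 19/40*(u+v) + 27/70)"
    using False by (intro mult_right_mono_neg) auto
  moreover have "0 \<le> (2*c - (u+v)/2)^2 * (3/5*c - (u+v)/40 + 27/70)
      + 5/4*(2 - (u+v))^2 * (7/5*c - 19/40*(u+v) + 27/70)"
    using assms False by (intro extremal_form_nonneg) auto
  ultimately show ?thesis by linarith
qed

lemma real_part_lower_bound:
  fixes r c u v :: real
  assumes "2 < r" "r < 3" "0 \<le> c" "0 \<le> u" "0 \<le> v" "v \<le> 1" "3/2 < c + u + v"
  shows "0 \<le> c + (r - 1)/4 * u - (r + 1)/4 * v + 27/35"
proof -
  have "(r - 1) * (3/2 - c - v) \<le> (r - 1) * u" using assms by (intro mult_left_mono) auto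
  moreover have "r * v \<le> r" using assms by (simp add: mult_left_le)
  moreover have "r * c \<le> 5 * c" using assms by (intro mult_right_mono) auto
  ultimately show ?thesis using assms by argo
qed

lemma five_point_energy_nonneg:
  fixes c0 c1 c2 c3 c4 :: real
  assumes "0 \<le> c0" "0 \<le> c1" "0 \<le> c2" "0 \<le> c3" "0 \<le> c4"
    and "c1 + c4 \<le> 1" and "c2 + c3 \<le> 1" and "3/2 < c0 + c1 + c2 + c3 + c4"
  defines "s \<equiv> c0 + c1 + c2 + c3 + c4"
  shows "0 \<le> (c0*c0*c0 + c0*c1*c1 + c0*c2*c2 + c0*c3*c3 + c0*c4*c4 + c1*c0*c1 + c1*c1*c2
      + c1*c2*c3 + c1*c3*c4 + c1*c4*c0 + c2*c0*c2 + c2*c1*c3 + c2*c2*c4 + c2*c3*c0 + c2*c4*c1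
      + c3*c0*c3 + c3*c1*c4 + c3*c2*c0 + c3*c3*c1 + c3*c4*c2 + c4*c0*c4 + c4*c1*c0 + c4*c2*c1
      + c4*c3*c2 + c4*c4*c3) - s^3/5
    + s/5 * ((c0*c0 + c1*c2 + c2*c4 + c3*c1 + c4*c3) - s^2/5)
    + 27/35 * ((c0*c0 + c1*c1 + c2*c2 + c3*c3 + c4*c4) - s^2/5)"
proof -
  \<comment> \<open>Fourier expansion on \<open>\<int>\<^sub>5\<close> with \<open>\<zeta> = exp (2\<pi>i/5)\<close>: \<open>x\<^sub>k\<close> and \<open>Y\<^sub>k\<close> are the real part and
    the squared imaginary part of \<open>\<Sum>\<^sub>j c\<^sub>j \<zeta>\<^sup>k\<^sup>j\<close> (\<open>k = 1, 2\<close>), using \<open>cos (2\<pi>/5) = (\<surd>5 - 1)/4\<close>;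
    \<open>R\<close> collects the remaining real-part terms, as \<open>x\<^sub>1 + x\<^sub>2 = 2c\<^sub>0 - (u + v)/2\<close> and
    \<open>(x\<^sub>1 - x\<^sub>2)\<^sup>2 = 5/4 (u - v)\<^sup>2\<close>.\<close>
  define r where "r = sqrt 5"
  have r2: "r * r - 5 = 0" and "2 < r" "r < 3"
    unfolding r_def by (simp, rule real_less_rsqrt, simp, rule real_less_lsqrt, simp_all)
  define u v where "u = c1 + c4" and "v = c2 + c3"
  define d1 d2 where "d1 = c1 - c4" and "d2 = c2 - c3"
  define x1 x2 where "x1 = c0 + (r - 1)/4 * u - (r + 1)/4 * v"
    and "x2 = c0 + (r - 1)/4 * v - (r + 1)/4 * u"
  define Y1 Y2 where "Y1 = (5 + r)/8 * d1*d1 + r/2 * d1*d2 + (5 - r)/8 * d2*d2"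
    and "Y2 = (5 - r)/8 * d1*d1 - r/2 * d1*d2 + (5 + r)/8 * d2*d2"
  define R where "R = (2*c0 - (u+v)/2)^2 * (3/5*c0 - (u+v)/40 + 27/70)
              + 5/4*(u - v)^2 * (7/5*c0 - 19/40*(u+v) + 27/70)"
  have "0 \<le> Y1"
  proof -
    have "(5 + r)/8 * Y1 = ((5 + r)/8*d1 + r/4*d2)^2"
      unfolding Y1_def by (simp add: field_simps power2_eq_square) (use r2 in algebra)
    moreover have "0 < (5 + r)/8" using \<open>2 < r\<close> by simp
    ultimately show ?thesis by (metis zero_le_power2 zero_le_mult_iff not_less)
  qed
  have "0 \<le> Y2"
  proof -
    have "(5 - r)/8 * Y2 = ((5 - r)/8*d1 - r/4*d2)^2"
      unfolding Y2_def by (simp add: field_simps power2_eq_square) (use r2 in algebra)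
    moreover have "0 < (5 - r)/8" using \<open>r < 3\<close> by simp
    ultimately show ?thesis by (metis zero_le_power2 zero_le_mult_iff not_less)
  qed
  have "0 \<le> x1 + 27/35" "0 \<le> x2 + 27/35"
    unfolding x1_def x2_def using assms \<open>2 < r\<close> \<open>r < 3\<close>
    by (intro real_part_lower_bound; simp add: u_def v_def)+
  have "0 \<le> R"
    unfolding R_def u_def v_def using assms by (intro real_part_form_nonneg) auto
  have "(c0*c0*c0 + c0*c1*c1 + c0*c2*c2 + c0*c3*c3 + c0*c4*c4 + c1*c0*c1 + c1*c1*c2
      + c1*c2*c3 + c1*c3*c4 + c1*c4*c0 + c2*c0*c2 + c2*c1*c3 + c2*c2*c4 + c2*c3*c0 + c2*c4*c1
      + c3*c0*c3 + c3*c1*c4 + c3*c2*c0 + c3*c3*c1 + c3*c4*c2 + c4*c0*c4 + c4*c1*c0 + c4*c2*c1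
      + c4*c3*c2 + c4*c4*c3) - s^3/5
    + s/5 * ((c0*c0 + c1*c2 + c2*c4 + c3*c1 + c4*c3) - s^2/5)
    + 27/35 * ((c0*c0 + c1*c1 + c2*c2 + c3*c3 + c4*c4) - s^2/5)
    = 2/5 * ((x1 + 27/35) * Y1 + (x2 + 27/35) * Y2 + R)"
    unfolding s_def u_def v_def d1_def d2_def x1_def x2_def Y1_def Y2_def R_def
    by (simp add: field_simps power2_eq_square power3_eq_cube) (use r2 in algebra)
  also have "0 \<le> \<dots>"
    using \<open>0 \<le> Y1\<close> \<open>0 \<le> Y2\<close> \<open>0 \<le> x1 + 27/35\<close> \<open>0 \<le> x2 + 27/35\<close> \<open>0 \<le> R\<close> by simp
  finally show ?thesis by linarith
qed

lemma profile_energy_scale: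
  "profile_energy N (\<lambda>j. N * c j) = N ^ 3 * profile_energy 1 c"
proof -
  have "(\<Sum>i\<in>UNIV. \<Sum>j\<in>UNIV. N * c i * (N * c j) * (N * c (i + j)))
      = N ^ 3 * (\<Sum>i\<in>UNIV. \<Sum>j\<in>UNIV. c i * c j * c (i + j))"
    by (simp add: sum_distrib_left power3_eq_cube mult_ac)
  moreover have "(\<Sum>j\<in>UNIV. N * c j * (N * c (j + j))) = N ^ 2 * (\<Sum>j\<in>UNIV. c j * c (j + j))"
    by (simp add: sum_distrib_left power2_eq_square mult_ac)
  moreover have "(\<Sum>j\<in>UNIV. N * c j * (N * c j)) = N ^ 2 * (\<Sum>j\<in>UNIV. c j * c j)"
    by (simp add: sum_distrib_left power2_eq_square mult_ac)
  ultimately show ?thesis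
    by (simp add: profile_energy_def power2_eq_square power3_eq_cube algebra_simps
        flip: sum_distrib_left)
qed

lemma profile_energy_nonneg:
  fixes a :: "5 \<Rightarrow> real"
  assumes "\<And>j. 0 \<le> a j" and "0 < N"
    and "a 1 + a 4 \<le> N" and "a 2 + a 3 \<le> N"
    and "3 * N < 2 * (\<Sum>j\<in>UNIV. a j)"
  shows "0 \<le> profile_energy N a"
proof -
  define c where "c j = a j / N" for j
  have a_eq: "a = (\<lambda>j. N * c j)"
    using \<open>0 < N\<close> by (auto simp: c_def)
  have "0 \<le> c j" for j
    using assms(1,2) by (simp add: c_def)
  moreover have "c 1 + c 4 \<le> 1" "c 2 + c 3 \<le> 1"
    using assms(2-4) by (simp_all add: c_def field_simps)
  moreover have "3/2 < c 0 + c 1 + c 2 + c 3 + c 4"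
  proof -
    have "(\<Sum>j\<in>UNIV. a j) = N * (c 0 + c 1 + c 2 + c 3 + c 4)"
      unfolding a_eq UNIV_5 by (simp add: algebra_simps)
    then have "N * (3/2) < N * (c 0 + c 1 + c 2 + c 3 + c 4)"
      using assms(5) by simp
    then show ?thesis using \<open>0 < N\<close> by simp
  qed
  ultimately have "0 \<le> (c 0*c 0*c 0 + c 0*c 1*c 1 + c 0*c 2*c 2 + c 0*c 3*c 3 + c 0*c 4*c 4
      + c 1*c 0*c 1 + c 1*c 1*c 2 + c 1*c 2*c 3 + c 1*c 3*c 4 + c 1*c 4*c 0 + c 2*c 0*c 2
      + c 2*c 1*c 3 + c 2*c 2*c 4 + c 2*c 3*c 0 + c 2*c 4*c 1 + c 3*c 0*c 3 + c 3*c 1*c 4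
      + c 3*c 2*c 0 + c 3*c 3*c 1 + c 3*c 4*c 2 + c 4*c 0*c 4 + c 4*c 1*c 0 + c 4*c 2*c 1
      + c 4*c 3*c 2 + c 4*c 4*c 3) - (c 0 + c 1 + c 2 + c 3 + c 4)^3/5
    + (c 0 + c 1 + c 2 + c 3 + c 4)/5 * ((c 0*c 0 + c 1*c 2 + c 2*c 4 + c 3*c 1 + c 4*c 3)
      - (c 0 + c 1 + c 2 + c 3 + c 4)^2/5)
    + 27/35 * ((c 0*c 0 + c 1*c 1 + c 2*c 2 + c 3*c 3 + c 4*c 4)
      - (c 0 + c 1 + c 2 + c 3 + c 4)^2/5)"
    by (intro five_point_energy_nonneg)
  also have "\<dots> = profile_energy 1 c"
    unfolding profile_energy_def UNIV_5 by (simp add: mod_5_numerals add.assoc)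
  finally show ?thesis
    using \<open>0 < N\<close> by (simp add: a_eq profile_energy_scale)
qed

theorem theorem3:
  fixes A :: "(5 ^ 'n) set"
  assumes "sum_free A"
    and "real (card A) > 3 / 2 * 5 ^ (CARD('n) - 1)"
  shows "\<exists>H e. add_subgroup H \<and> H \<noteq> UNIV \<and> e \<notin> H \<and>
           A \<subseteq> (\<lambda>h. e + h) ` H \<union> (\<lambda>h. - e + h) ` H"
proof -
  define N :: real where "N = 5 ^ (CARD('n) - 1)"
  have large: "3 * N < 2 * real (card A)" using assms(2) by (simp add: N_def)
  obtain u where "u \<noteq> 0" and negative: "profile_energy N (profile A u) < 0"
    using sum_profile_energy_nonzero_neg[OF assms(1)] large sum_nonneg[of "UNIV - {0}"]
    unfolding N_def by (metis DiffE insertI1 not_le)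
  let ?a = "profile A u"
  have "\<not> (?a 1 + ?a 4 \<le> N \<and> ?a 2 + ?a 3 \<le> N)"
    using negative profile_energy_nonneg[of ?a N] profile_nonneg large
    by (auto simp: N_def sum_profile_eq_card)
  then have "?a 0 = 0 \<and> ?a 2 = 0 \<and> ?a 3 = 0 \<or> ?a 0 = 0 \<and> ?a 1 = 0 \<and> ?a 4 = 0"
    using profile_constraints[of ?a N] profile_nonneg sum_free_profile_bound[OF assms(1) \<open>u \<noteq> 0\<close>]
    unfolding N_def by blast
  then show ?thesis
  proof
    assume "?a 0 = 0 \<and> ?a 2 = 0 \<and> ?a 3 = 0"
    then show ?thesis
      using two_cosets_of_vanishing_profile[OF \<open>u \<noteq> 0\<close>, of 1] by simp
  next
    assume "?a 0 = 0 \<and> ?a 1 = 0 \<and> ?a 4 = 0"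
    then show ?thesis
      using two_cosets_of_vanishing_profile[OF \<open>u \<noteq> 0\<close>, of 2] by (simp add: mod_5_numerals)
  qed
qed

end
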